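(* Let $0<\theta<\frac{\pi}{4}$ and let $N\ge 2$ be an integer. Let $|\psi_{\mathrm{GGHZ}}\rangle=\cos\theta|000\rangle+\sin\theta|111\rangle$ and $|\psi_{\mathrm{GHZ}}\rangle=\frac{1}{\sqrt2}(|000\rangle+|111\rangle)$ be three-qubit states on $\mathcal H_A\otimes\mathcal H_B\otimes\mathcal H_C$. For $x\in\{0,1,2\}$ and $a\in\{0,1\}$ let $P_{a|x}$ be the projector onto the eigenvector of $\sigma_x$ (if $x=0$), $\sigma_y$ (if $x=1$), $\sigma_z$ (if $x=2$) with eigenvalue $(-1)^a$. Define the assemblages on Bob–Charlie $$\sigma^{\mathrm{GGHZ}}_{a|x}=\mathrm{Tr}_A\big[(P_{a|x}\otimes\mathbb 1\otimes\mathbb 1)|\psi_{\mathrm{GGHZ}}\rangle\langle\psi_{\mathrm{GGHZ}}|\big],\qquad \sigma^{\mathrm{GHZ}}_{a|x}=\mathrm{Tr}_A\big[(P_{a|x}\otimes\mathbb 1\otimes\mathbb 1)|\psi_{\mathrm{GHZ}}\rangle\langle\psi_{\mathrm{GHZ}}|\big].$$ Let $P_{\mathrm{fail}}=(1-2\sin^2\theta)^{N-1}$, $P_{\mathrm{success}}=1-P_{\mathrm{fail}}$, and let $\sigma^{\mathrm{dist}}_{a|x}=P_{\mathrm{success}}\,\sigma^{\mathrm{GHZ}}_{a|x}+P_{\mathrm{fail}}\,\sigma^{\mathrm{GGHZ}}_{a|x}$ be the assemblage obtained on average from $N$ copies of $\{\sigma^{\mathrm{GGHZ}}_{a|x}\}$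 by the distillation protocol described in the context. Then $$\mathcal F_A\big(\{\sigma^{\mathrm{dist}}_{a|x}\}_{a,x},\{\sigma^{\mathrm{GHZ}}_{a|x}\}_{a,x}\big)=\sqrt{1-\tfrac12(1-\sin2\theta)(\cos2\theta)^{N-1}}.$$
   Context: $\sigma_x,\sigma_y,\sigma_z$ are the Pauli matrices in the computational basis $\{|0\rangle,|1\rangle\}$. For positive semidefinite operators $A,B$, the fidelity is $\mathcal F(A,B)=\mathrm{Tr}\big[\sqrt{\sqrt A B\sqrt A}\big]$. For two assemblages $\{\sigma_{a|x}\}$, $\{\tau_{a|x}\}$ (collections of unnormalized states indexed by Alice's input $x$ and outcome $a$), the assemblage fidelity is $\mathcal F_A(\{\sigma_{a|x}\},\{\tau_{a|x}\})=\min_x\sum_a\mathcal F(\sigma_{a|x},\tau_{a|x})$. The distillation protocol (one-sided device-independent setting: Alice untrusted, Bob and Charlie trusted): on each of the first $N-1$ copies the trusted party/parties apply a local two-outcome filter (e.g. Bob alone with Kraus operators $K_0=\mathrm{diag}(\tan\theta,1)$, $K_1=\mathrm{diag}(\sqrt{1-\tan^2\theta},0)$); outcome $0$, which occurs with probability $2\sin^2\theta$ per copy, transforms the copy into $\{\sigma^{\mathrm{GHZ}}_{a|x}\}$; copies with outcome $1$ are discarded, and if all first $N-1$ copies fail the untouched $N$-th copy is kept. Thus on average the output is the convex combination $\sigma^{\mathrm{dist}}$ defined in the claim. *)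

theory Defs
  imports Complex_Main "Jordan_Normal_Form.Matrix" "Jordan_Normal_Form.Schur_Decomposition"
begin

(* Matrices are Jordan_Normal_Form complex matrices.  Qubit ordering: a three-qubit
   basis state |a b c> (A,B,C) has index 4a + 2b + c, i.e. the usual Kronecker order. *)

definition mtrace :: "complex mat \<Rightarrow> complex" where
  "mtrace A = (\<Sum>i<dim_row A. A $$ (i,i))"

definition psd :: "nat \<Rightarrow> complex mat \<Rightarrow> bool" where
  "psd n A \<longleftrightarrow> A \<in> carrier_mat n n \<and> mat_adjoint A = A \<and>
     (\<forall>v \<in> carrier_vec n. 0 \<le> Re ((A *\<^sub>v v) \<bullet>c v))"

definition msqrt :: "complex mat \<Rightarrow> complex mat" where
  "msqrt A = (THE B. psd (dim_row A) B \<and> B * B = A)"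

(* fidelity F(A,B) = Tr sqrt(sqrt A B sqrt A)  (real for PSD arguments) *)
definition fidelity :: "complex mat \<Rightarrow> complex mat \<Rightarrow> real" where
  "fidelity A B = Re (mtrace (msqrt (msqrt A * B * msqrt A)))"

(* assemblage fidelity: min over inputs x in {0,1,2} of sum over outcomes a in {0,1};
   an assemblage is a function  a \<Rightarrow> x \<Rightarrow> matrix *)
definition assemblage_fidelity ::
  "(nat \<Rightarrow> nat \<Rightarrow> complex mat) \<Rightarrow> (nat \<Rightarrow> nat \<Rightarrow> complex mat) \<Rightarrow> real" where
  "assemblage_fidelity s t = Min ((\<lambda>x. \<Sum>a<2. fidelity (s a x) (t a x)) ` {..<3})"

definition kron :: "complex mat \<Rightarrow> complex mat \<Rightarrow> complex mat" where
  "kron A B = mat (dim_row A * dim_row B) (dim_col A * dim_col B)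
     (\<lambda>(i,j). A $$ (i div dim_row B, j div dim_col B) * B $$ (i mod dim_row B, j mod dim_col B))"

definition ptrace_first :: "nat \<Rightarrow> nat \<Rightarrow> complex mat \<Rightarrow> complex mat" where
  "ptrace_first dA dR M = mat dR dR (\<lambda>(i,j). \<Sum>k<dA. M $$ (k*dR + i, k*dR + j))"

definition proj_ket :: "complex vec \<Rightarrow> complex mat" where
  "proj_ket v = mat (dim_vec v) (dim_vec v) (\<lambda>(i,j). v $ i * cnj (v $ j))"

definition pauli_x :: "complex mat" where
  "pauli_x = mat 2 2 (\<lambda>(i,j). if i \<noteq> j then 1 else 0)"
definition pauli_y :: "complex mat" where
  "pauli_y = mat 2 2 (\<lambda>(i,j). if i = 0 \<and> j = 1 then - \<i> else if i = 1 \<and> j = 0 then \<i> else 0)"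
definition pauli_z :: "complex mat" where
  "pauli_z = mat 2 2 (\<lambda>(i,j). if i = j then (if i = 0 then 1 else -1) else 0)"

definition pauli :: "nat \<Rightarrow> complex mat" where
  "pauli x = (if x = 0 then pauli_x else if x = 1 then pauli_y else pauli_z)"

(* P_{a|x}: projector onto the eigenvector of pauli x with eigenvalue (-1)^a,
   i.e. the spectral projector (1 + (-1)^a sigma)/2 *)
definition meas_proj :: "nat \<Rightarrow> nat \<Rightarrow> complex mat" where
  "meas_proj a x = (1/2) \<cdot>\<^sub>m (1\<^sub>m 2 + ((-1)^a) \<cdot>\<^sub>m pauli x)"

definition psi_GGHZ :: "real \<Rightarrow> complex vec" where
  "psi_GGHZ \<theta> = vec 8 (\<lambda>i. if i = 0 then complex_of_real (cos \<theta>)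
                          else if i = 7 then complex_of_real (sin \<theta>) else 0)"

definition psi_GHZ :: "complex vec" where
  "psi_GHZ = vec 8 (\<lambda>i. if i = 0 \<or> i = 7 then complex_of_real (1 / sqrt 2) else 0)"

definition assemblage_of :: "complex vec \<Rightarrow> nat \<Rightarrow> nat \<Rightarrow> complex mat" where
  "assemblage_of psi a x =
     ptrace_first 2 4 (kron (kron (meas_proj a x) (1\<^sub>m 2)) (1\<^sub>m 2) * proj_ket psi)"

end

theory Submission
  imports Defs
begin

(* All assemblage elements are supported on span{|00>, |11>} of Bob and Charlie, where they are
   rank one: for the state alpha |000> + beta |111> and Alice's outcome with eigenvector e of the
   measured Pauli matrix, sigma_{a|x} = |v><v| with v = (alpha cnj e_0, beta cnj e_1).  For a positive
   semidefinite H on this plane, F(H, |v><v|) = sqrt <v|H|v>; since msqrt is defined by uniqueness, this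
   needs the explicit square root of a positive semidefinite 2x2 matrix.  Consequently
   F(sigma_dist_{a|x}, sigma_GHZ_{a|x}) is the length of the plane vector
   (sqrt P_success / 2, sqrt (P_fail / 2) (cos theta |e_0|^2 + sin theta |e_1|^2)).  For every input x
   the two vectors (a = 0, 1) add up to (sqrt P_success, sqrt (P_fail / 2) (cos theta + sin theta)),
   so by the triangle inequality each fidelity sum is at least the length of this sum, with equality
   for x = 0 (sigma_x), where the two vectors coincide. *)

lemma sum_lessThan_4: "(\<Sum>k<4::nat. f k) = f 0 + f 1 + f 2 + (f 3 :: 'a::comm_monoid_add)"
  by (simp add: eval_nat_numeral add.assoc)

lemma sum_atLeast0_lessThan_4: "(\<Sum>k\<in>{0..<4::nat}. f k) = f 0 + f 1 + f 2 + (f 3 :: 'a::comm_monoid_add)"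
  by (simp add: sum_lessThan_4 atLeast0LessThan)

lemma sum_atLeast0_lessThan_8:
  "(\<Sum>k\<in>{0..<8::nat}. f k) = f 0 + f 1 + f 2 + f 3 + f 4 + f 5 + f 6 + (f 7 :: 'a::comm_monoid_add)"
  by (simp add: eval_nat_numeral atLeast0_lessThan_Suc add.assoc add.commute add.left_commute)

lemma sum_lessThan_2: "(\<Sum>k<2::nat. f k) = f 0 + (f 1 :: 'a::comm_monoid_add)"
  by (simp add: eval_nat_numeral)

lemma less_4_cases: "(i::nat) < 4 \<longleftrightarrow> i = 0 \<or> i = 1 \<or> i = 2 \<or> i = 3"
  by auto

lemma mult_cnj_eq_norm_sq: "z * cnj z = complex_of_real ((cmod z)\<^sup>2)" "cnj z * z = complex_of_real ((cmod z)\<^sup>2)"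
  using complex_norm_square[of z] by (simp_all add: mult.commute)

(* The 2x2 matrix [[a, b], [c, d]] on span{|00>, |11>} (indices 0 and 3), zero elsewhere. *)
definition block_03 :: "complex \<Rightarrow> complex \<Rightarrow> complex \<Rightarrow> complex \<Rightarrow> complex mat" where
  "block_03 a b c d = mat 4 4 (\<lambda>(i,j). if i = 0 \<and> j = 0 then a else if i = 0 \<and> j = 3 then b
     else if i = 3 \<and> j = 0 then c else if i = 3 \<and> j = 3 then d else 0)"

lemma block_03_carrier [simp]:
  "block_03 a b c d \<in> carrier_mat 4 4" "dim_row (block_03 a b c d) = 4" "dim_col (block_03 a b c d) = 4"
  by (auto simp: block_03_def)

lemma block_03_eq_iff: "block_03 a b c d = block_03 a' b' c' d' \<longleftrightarrow> a = a' \<and> b = b' \<and> c = c' \<and> d = d'"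
proof
  assume "block_03 a b c d = block_03 a' b' c' d'"
  then have "block_03 a b c d $$ (i,j) = block_03 a' b' c' d' $$ (i,j)" for i j
    by simp
  from this[of 0 0] this[of 0 3] this[of 3 0] this[of 3 3] show "a = a' \<and> b = b' \<and> c = c' \<and> d = d'"
    by (simp add: block_03_def)
qed simp

lemma block_03_mult:
  "block_03 a b c d * block_03 a' b' c' d' = block_03 (a*a' + b*c') (a*b' + b*d') (c*a' + d*c') (c*b' + d*d')"
  by (rule eq_matI) (auto simp: block_03_def scalar_prod_def sum_atLeast0_lessThan_4 less_4_cases)

lemma block_03_smult: "z \<cdot>\<^sub>m block_03 a b c d = block_03 (z*a) (z*b) (z*c) (z*d)"
  by (rule eq_matI) (auto simp: block_03_def)

lemma block_03_add: "block_03 a b c d + block_03 a' b' c' d' = block_03 (a+a') (b+b') (c+c') (d+d')"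
  by (rule eq_matI) (auto simp: block_03_def)

lemma mat_adjoint_index: "i < dim_col A \<Longrightarrow> j < dim_row A \<Longrightarrow> mat_adjoint A $$ (i,j) = cnj (A $$ (j,i))"
  by (simp add: mat_adjoint_def mat_of_rows_def)

lemma mat_adjoint_block_03: "mat_adjoint (block_03 a b c d) = block_03 (cnj a) (cnj c) (cnj b) (cnj d)"
  by (rule eq_matI)
    (auto simp: mat_adjoint_index, auto simp: block_03_def mat_adjoint_def mat_of_rows_def less_4_cases)

lemma block_03_inner_prod:
  "v \<in> carrier_vec 4 \<Longrightarrow> (block_03 a b c d *\<^sub>v v) \<bullet>c v
     = a * v$0 * cnj (v$0) + b * v$3 * cnj (v$0) + c * v$0 * cnj (v$3) + d * v$3 * cnj (v$3)"
  by (simp add: block_03_def mult_mat_vec_def scalar_prod_def sum_atLeast0_lessThan_4 ring_distribs add.assoc)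

definition herm_block :: "real \<Rightarrow> complex \<Rightarrow> real \<Rightarrow> complex mat" where
  "herm_block p q r = block_03 (of_real p) q (cnj q) (of_real r)"

definition block_form :: "real \<Rightarrow> complex \<Rightarrow> real \<Rightarrow> complex \<Rightarrow> complex \<Rightarrow> real" where
  "block_form p q r x y = p * (cmod x)\<^sup>2 + r * (cmod y)\<^sup>2 + 2 * Re (q * y * cnj x)"

definition block_psd :: "real \<Rightarrow> complex \<Rightarrow> real \<Rightarrow> bool" where
  "block_psd p q r \<longleftrightarrow> 0 \<le> p \<and> 0 \<le> r \<and> (cmod q)\<^sup>2 \<le> p * r"

lemma herm_block_eq_iff: "herm_block p q r = herm_block p' q' r' \<longleftrightarrow> p = p' \<and> q = q' \<and> r = r'"
  by (auto simp: herm_block_def block_03_eq_iff)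

lemma herm_block_quadratic_form:
  assumes "v \<in> carrier_vec 4"
  shows "Re ((herm_block p q r *\<^sub>v v) \<bullet>c v) = block_form p q r (v$0) (v$3)"
proof -
  have "Re ((herm_block p q r *\<^sub>v v) \<bullet>c v)
      = p * ((Re (v$0))\<^sup>2 + (Im (v$0))\<^sup>2) + r * ((Re (v$3))\<^sup>2 + (Im (v$3))\<^sup>2) + 2 * Re (q * v$3 * cnj (v$0))"
    unfolding herm_block_def block_03_inner_prod[OF assms] by (simp add: power2_eq_square algebra_simps)
  then show ?thesis
    unfolding block_form_def cmod_power2 .
qed

lemma block_form_nonneg:
  assumes "block_psd p q r"
  shows "0 \<le> block_form p q r x y"
proof -
  have "\<bar>Re (q * y * cnj x)\<bar> \<le> cmod q * (cmod x * cmod y)"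
    using abs_Re_le_cmod[of "q * y * cnj x"] by (simp add: norm_mult mult_ac)
  also have "\<dots> \<le> sqrt (p * r) * (cmod x * cmod y)"
    using assms by (intro mult_right_mono) (auto simp: block_psd_def intro: real_le_rsqrt)
  also have "\<dots> = (sqrt p * cmod x) * (sqrt r * cmod y)"
    by (simp add: real_sqrt_mult)
  also have "2 * \<dots> \<le> (sqrt p * cmod x)\<^sup>2 + (sqrt r * cmod y)\<^sup>2"
    using sum_squares_bound[of "sqrt p * cmod x" "sqrt r * cmod y"] by (simp add: mult.assoc)
  also have "\<dots> = p * (cmod x)\<^sup>2 + r * (cmod y)\<^sup>2"
    using assms by (simp add: block_psd_def power_mult_distrib)
  finally show ?thesis
    unfolding block_form_def by linarith
qed

lemma block_psd_if_form_nonneg: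
  assumes form: "\<And>x y. 0 \<le> block_form p q r x y"
  shows "block_psd p q r"
proof -
  have p: "0 \<le> p" and r: "0 \<le> r"
    using form[of 1 0] form[of 0 1] by (simp_all add: block_form_def)
  \<comment> \<open>test the form at (-q, p), and at (-s q, 1) for large s when p = 0\<close>
  have "q * of_real p * cnj (- q) = - of_real p * (q * cnj q)"
    by (simp add: algebra_simps)
  also have "\<dots> = - of_real (p * (cmod q)\<^sup>2)"
    by (simp add: mult_cnj_eq_norm_sq)
  finally have cross: "q * of_real p * cnj (- q) = - of_real (p * (cmod q)\<^sup>2)" .
  have "block_form p q r (- q) (of_real p) = p * (cmod q)\<^sup>2 + r * p\<^sup>2 - 2 * (p * (cmod q)\<^sup>2)"
    unfolding block_form_def cross using p by simp
  then have det: "0 \<le> p * (p * r - (cmod q)\<^sup>2)"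
    using form[of "- q" "of_real p"] by (simp add: power2_eq_square algebra_simps)
  show ?thesis
  proof (cases "p = 0")
    case True
    have "q = 0"
    proof (rule ccontr)
      assume "q \<noteq> 0"
      define s where "s = (r + 1) / (cmod q)\<^sup>2"
      have "q * cnj (- of_real s * q) = - of_real s * (q * cnj q)"
        by (simp add: algebra_simps)
      also have "\<dots> = - of_real (s * (cmod q)\<^sup>2)"
        by (simp add: mult_cnj_eq_norm_sq)
      finally have cross: "q * cnj (- of_real s * q) = - of_real (s * (cmod q)\<^sup>2)" .
      have "0 \<le> r - 2 * (s * (cmod q)\<^sup>2)"
        using form[of "- of_real s * q" 1] True unfolding block_form_def mult_1_right cross by simp
      moreover have "s * (cmod q)\<^sup>2 = r + 1"
        using \<open>q \<noteq> 0\<close> by (simp add: s_def)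
      ultimately show False
        using r by linarith
    qed
    then show ?thesis
      using p r True by (simp add: block_psd_def)
  next
    case False
    then show ?thesis
      using p r det by (simp add: block_psd_def zero_le_mult_iff)
  qed
qed

lemma block_psd_iff_form_nonneg: "block_psd p q r \<longleftrightarrow> (\<forall>x y. 0 \<le> block_form p q r x y)"
  using block_form_nonneg block_psd_if_form_nonneg by blast

lemma psd_herm_block:
  assumes "block_psd p q r"
  shows "psd 4 (herm_block p q r)"
  using block_form_nonneg[OF assms]
  by (auto simp: psd_def herm_block_def mat_adjoint_block_03 herm_block_quadratic_form[unfolded herm_block_def])

lemma block_form_combination:
  "block_form (s * p + t * p') (of_real s * q + of_real t * q') (s * r + t * r') x y
     = s * block_form p q r x y + t * block_form p' q' r' x y"
  by (simp add: block_form_def algebra_simps)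

lemma block_psd_combination:
  assumes "0 \<le> s" "0 \<le> t" "block_psd p q r" "block_psd p' q' r'"
  shows "block_psd (s * p + t * p') (of_real s * q + of_real t * q') (s * r + t * r')"
  using assms unfolding block_psd_iff_form_nonneg block_form_combination by simp

lemma herm_block_combination:
  "of_real s \<cdot>\<^sub>m herm_block p q r + of_real t \<cdot>\<^sub>m herm_block p' q' r'
     = herm_block (s * p + t * p') (of_real s * q + of_real t * q') (s * r + t * r')"
  by (simp add: herm_block_def block_03_smult block_03_add block_03_eq_iff)

lemma psd_index_cnj: "psd n B \<Longrightarrow> i < n \<Longrightarrow> j < n \<Longrightarrow> B $$ (i,j) = cnj (B $$ (j,i))"
  unfolding psd_def by (metis carrier_matD mat_adjoint_index)

lemma psd_column_zero:
  assumes B: "psd 4 B" and k: "k < 4" and diag: "(B * B) $$ (k,k) = 0" and i: "i < 4"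
  shows "B $$ (i,k) = 0"
proof -
  have "B \<in> carrier_mat 4 4"
    using B by (simp add: psd_def)
  then have "(B * B) $$ (k,k) = (\<Sum>j<4. B $$ (k,j) * B $$ (j,k))"
    using k by (simp add: scalar_prod_def lessThan_atLeast0)
  also have "\<dots> = (\<Sum>j<4. complex_of_real ((cmod (B $$ (j,k)))\<^sup>2))"
    using psd_index_cnj[OF B k] by (intro sum.cong) (auto simp: mult_cnj_eq_norm_sq)
  finally have "(\<Sum>j<4. (cmod (B $$ (j,k)))\<^sup>2) = 0"
    using diag by (metis of_real_eq_0_iff of_real_sum)
  then show ?thesis
    using i by (subst (asm) sum_nonneg_eq_0_iff) auto
qed

lemma psd_square_root_of_herm_block:
  assumes B: "psd 4 B" and square: "B * B = herm_block p q r"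
  obtains a b c where "B = herm_block a b c" "block_psd a b c"
proof
  let ?a = "Re (B $$ (0,0))" and ?b = "B $$ (0,3)" and ?c = "Re (B $$ (3,3))"
  have col1: "B $$ (i,1) = 0" and col2: "B $$ (i,2) = 0" if "i < 4" for i
    using psd_column_zero[OF B _ _ that, of 1] psd_column_zero[OF B _ _ that, of 2] square
    by (simp_all add: herm_block_def block_03_def)
  have row1: "B $$ (1,j) = 0" and row2: "B $$ (2,j) = 0" if "j < 4" for j
    using psd_index_cnj[OF B _ that, of 1] psd_index_cnj[OF B _ that, of 2] col1[OF that] col2[OF that]
    by simp_all
  have real_diag: "B $$ (i,i) = of_real (Re (B $$ (i,i)))" if "i < 4" for i
  proof -
    have "Im (B $$ (i,i)) = 0"
      using arg_cong[OF psd_index_cnj[OF B that that], of Im] by simp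
    then show ?thesis
      by (simp add: complex_eq_iff)
  qed
  have "B $$ (3,0) = cnj ?b"
    using psd_index_cnj[OF B, of 3 0] by simp
  note entries = col1 col2 row1 row2 real_diag[of 0] real_diag[of 3] this
  show B_eq: "B = herm_block ?a ?b ?c"
  proof (rule eq_matI)
    fix i j
    assume "i < dim_row (herm_block ?a ?b ?c)" "j < dim_col (herm_block ?a ?b ?c)"
    then have "i < 4" "j < 4"
      by (auto simp: herm_block_def)
    then show "B $$ (i,j) = herm_block ?a ?b ?c $$ (i,j)"
      unfolding less_4_cases using entries by (elim disjE) (simp_all add: herm_block_def block_03_def)
  qed (use B in \<open>auto simp: psd_def herm_block_def\<close>)
  show "block_psd ?a ?b ?c"
  proof (rule block_psd_if_form_nonneg)
    fix x y :: complex
    let ?v = "vec 4 (\<lambda>i. if i = 0 then x else if i = 3 then y else 0)"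
    have "0 \<le> Re ((B *\<^sub>v ?v) \<bullet>c ?v)"
      using B by (simp add: psd_def)
    then show "0 \<le> block_form ?a ?b ?c x y"
      by (subst (asm) B_eq) (simp add: herm_block_quadratic_form)
  qed
qed

lemma herm_block_square:
  "herm_block a b c * herm_block a b c
     = herm_block (a\<^sup>2 + (cmod b)\<^sup>2) (b * of_real (a + c)) (c\<^sup>2 + (cmod b)\<^sup>2)"
  by (simp add: herm_block_def block_03_mult block_03_eq_iff mult_cnj_eq_norm_sq algebra_simps power2_eq_square)

(* The 2x2 square-root formula sqrt M = (M + sqrt (det M) I) / sqrt (tr M + 2 sqrt (det M)). *)
lemma block_psd_sqrt_coeffs:
  assumes "block_psd a b c"
  defines "p \<equiv> a\<^sup>2 + (cmod b)\<^sup>2" and "q \<equiv> b * of_real (a + c)" and "r \<equiv> c\<^sup>2 + (cmod b)\<^sup>2"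
  defines "d \<equiv> sqrt (p * r - (cmod q)\<^sup>2)"
  defines "t \<equiv> sqrt (p + r + 2 * d)"
  shows "a = (p + d) / t \<and> b = q / of_real t \<and> c = (r + d) / t"
proof -
  have a: "0 \<le> a" and c: "0 \<le> c" and det: "(cmod b)\<^sup>2 \<le> a * c"
    using assms(1) by (auto simp: block_psd_def)
  have "cmod q = cmod b * (a + c)"
    using a c by (simp add: q_def norm_mult flip: of_real_add)
  then have "p * r - (cmod q)\<^sup>2 = (a * c - (cmod b)\<^sup>2)\<^sup>2"
    by (simp add: p_def r_def power2_eq_square algebra_simps)
  then have d_eq: "d = a * c - (cmod b)\<^sup>2"
    using det by (simp add: d_def)
  have "p + r + 2 * d = (a + c)\<^sup>2"
    by (simp add: p_def r_def d_eq power2_eq_square algebra_simps)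
  then have t_eq: "t = a + c"
    using a c by (simp add: t_def)
  show ?thesis
  proof (cases "a + c = 0")
    case True
    then have "a = 0" "c = 0"
      using a c by auto
    moreover from this have "b = 0"
      using det by simp
    ultimately show ?thesis
      by (simp add: q_def t_eq)
  next
    case False
    then have "0 < a + c"
      using a c by simp
    then show ?thesis
      by (simp add: t_eq d_eq p_def r_def q_def field_simps power2_eq_square del: of_real_add)
  qed
qed

lemma block_psd_sqrt_exists:
  assumes psd: "block_psd p q r"
  obtains a b c where "block_psd a b c" "herm_block a b c * herm_block a b c = herm_block p q r"
proof -
  define d where "d = sqrt (p * r - (cmod q)\<^sup>2)"
  define t where "t = sqrt (p + r + 2 * d)"
  have p: "0 \<le> p" and r: "0 \<le> r" and det: "(cmod q)\<^sup>2 \<le> p * r"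
    using psd by (auto simp: block_psd_def)
  have d: "0 \<le> d" "d\<^sup>2 = p * r - (cmod q)\<^sup>2"
    using det by (auto simp: d_def)
  have t: "0 \<le> t" "t\<^sup>2 = p + r + 2 * d"
    using p r d by (auto simp: t_def)
  show ?thesis
  proof (cases "t = 0")
    case True
    then have "p = 0" "r = 0"
      using p r d t by auto
    moreover from this have "q = 0"
      using det by simp
    ultimately show ?thesis
      using that[of 0 0 0] by (simp add: block_psd_def herm_block_square)
  next
    case False
    then have t_pos: "0 < t"
      using t by simp
    define a b c where "a = (p + d) / t" and "b = q / of_real t" and "c = (r + d) / t"
    have norm_b: "cmod b = cmod q / t"
      using t_pos by (simp add: b_def norm_divide)
    show ?thesis
    proof (rule that)
      have "(p + d) * (r + d) = p * r + d * p + d * r + d\<^sup>2"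
        by (simp add: power2_eq_square algebra_simps)
      moreover have "0 \<le> d * p" "0 \<le> d * r"
        using p r d by simp_all
      ultimately have "(cmod q)\<^sup>2 \<le> (p + d) * (r + d)"
        using d det by linarith
      then show "block_psd a b c"
        using p r d t_pos by (simp add: block_psd_def a_def c_def norm_b field_simps power2_eq_square)
      have "(p + d)\<^sup>2 + (cmod q)\<^sup>2 = p * t\<^sup>2" "(r + d)\<^sup>2 + (cmod q)\<^sup>2 = r * t\<^sup>2"
        using d t by (simp_all add: power2_eq_square algebra_simps)
      then have "a\<^sup>2 + (cmod b)\<^sup>2 = p" "c\<^sup>2 + (cmod b)\<^sup>2 = r"
        using t_pos unfolding norm_b a_def c_def by (simp_all add: field_simps power2_eq_square)
      moreover have "a + c = t"
        using t_pos t(2) by (simp add: a_def c_def add_divide_distrib[symmetric] power2_eq_square field_simps)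
      then have "b * of_real (a + c) = q"
        using t_pos by (simp add: b_def)
      ultimately show "herm_block a b c * herm_block a b c = herm_block p q r"
        unfolding herm_block_square by simp
    qed
  qed
qed

lemma msqrt_herm_block_square:
  assumes "block_psd a b c"
  shows "msqrt (herm_block a b c * herm_block a b c) = herm_block a b c"
  unfolding msqrt_def
proof (rule the_equality)
  show "psd (dim_row (herm_block a b c * herm_block a b c)) (herm_block a b c) \<and>
      herm_block a b c * herm_block a b c = herm_block a b c * herm_block a b c"
    using psd_herm_block[OF assms] by (simp add: herm_block_def)
next
  fix B
  assume "psd (dim_row (herm_block a b c * herm_block a b c)) B \<and> B * B = herm_block a b c * herm_block a b c"
  then have B: "psd 4 B" and square: "B * B = herm_block a b c * herm_block a b c"
    by (simp_all add: herm_block_def)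
  obtain a' b' c' where B_eq: "B = herm_block a' b' c'" and psd': "block_psd a' b' c'"
    using psd_square_root_of_herm_block[OF B square[unfolded herm_block_square]] .
  from square have "a'\<^sup>2 + (cmod b')\<^sup>2 = a\<^sup>2 + (cmod b)\<^sup>2 \<and> b' * of_real (a' + c') = b * of_real (a + c)
      \<and> c'\<^sup>2 + (cmod b')\<^sup>2 = c\<^sup>2 + (cmod b)\<^sup>2"
    unfolding B_eq herm_block_square herm_block_eq_iff .
  then show "B = herm_block a b c"
    using block_psd_sqrt_coeffs[OF psd'] block_psd_sqrt_coeffs[OF assms] B_eq by simp
qed

(* |v><v| for v = x |00> + y |11> *)
definition rank_one_block :: "complex \<Rightarrow> complex \<Rightarrow> complex mat" where
  "rank_one_block x y = herm_block ((cmod x)\<^sup>2) (x * cnj y) ((cmod y)\<^sup>2)"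

lemma rank_one_block_eq_block_03:
  "rank_one_block x y = block_03 (x * cnj x) (x * cnj y) (y * cnj x) (y * cnj y)"
  by (simp add: rank_one_block_def herm_block_def block_03_eq_iff mult_cnj_eq_norm_sq mult.commute)

lemma block_form_rank_one:
  "block_form ((cmod x)\<^sup>2) (x * cnj y) ((cmod y)\<^sup>2) w0 w3 = (cmod (x * cnj w0 + y * cnj w3))\<^sup>2"
proof -
  have "complex_of_real (block_form ((cmod x)\<^sup>2) (x * cnj y) ((cmod y)\<^sup>2) w0 w3)
      = (x * cnj x) * (w0 * cnj w0) + (y * cnj y) * (w3 * cnj w3)
        + (x * cnj y * w3 * cnj w0 + cnj (x * cnj y * w3 * cnj w0))"
    unfolding block_form_def complex_add_cnj by (simp add: mult_cnj_eq_norm_sq)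
  also have "\<dots> = (x * cnj w0 + y * cnj w3) * cnj (x * cnj w0 + y * cnj w3)"
    by (simp add: algebra_simps)
  finally show ?thesis
    by (simp only: mult_cnj_eq_norm_sq of_real_eq_iff)
qed

lemma block_psd_rank_one: "block_psd ((cmod x)\<^sup>2) (x * cnj y) ((cmod y)\<^sup>2)"
  unfolding block_psd_iff_form_nonneg block_form_rank_one by simp

lemma mtrace_herm_block: "mtrace (herm_block p q r) = of_real (p + r)"
  by (simp add: mtrace_def herm_block_def block_03_def sum_lessThan_4)

lemma trace_msqrt_rank_one_block:
  "Re (mtrace (msqrt (rank_one_block x y))) = sqrt ((cmod x)\<^sup>2 + (cmod y)\<^sup>2)"
proof -
  define n where "n = sqrt ((cmod x)\<^sup>2 + (cmod y)\<^sup>2)"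
  have n_sq: "n\<^sup>2 = (cmod x)\<^sup>2 + (cmod y)\<^sup>2"
    by (simp add: n_def)
  \<comment> \<open>the root is |v><v| / |v|, since (|v><v|)^2 = |v|^2 |v><v|\<close>
  let ?root = "herm_block ((cmod x)\<^sup>2 / n) (x * cnj y / of_real n) ((cmod y)\<^sup>2 / n)"
  have "block_psd ((cmod x)\<^sup>2 / n) (x * cnj y / of_real n) ((cmod y)\<^sup>2 / n)"
    using block_psd_combination[OF _ _ block_psd_rank_one block_psd_rank_one, of "1 / n" 0 x y]
    by (simp add: n_def)
  moreover have "?root * ?root = rank_one_block x y"
  proof (cases "n = 0")
    case True
    then show ?thesis
      using n_sq by (simp add: rank_one_block_def herm_block_square)
  next
    case False
    then have "n\<^sup>2 \<noteq> 0"
      by simp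
    then show ?thesis
      unfolding rank_one_block_def herm_block_square herm_block_eq_iff n_sq
      by (simp add: norm_mult norm_divide power_divide power_mult_distrib field_simps flip: n_sq)
        (simp add: n_sq, simp add: power2_eq_square power4_eq_xxxx algebra_simps)
  qed
  ultimately have "msqrt (rank_one_block x y) = ?root"
    using msqrt_herm_block_square by metis
  then have "Re (mtrace (msqrt (rank_one_block x y))) = ((cmod x)\<^sup>2 + (cmod y)\<^sup>2) / n"
    by (simp add: mtrace_herm_block add_divide_distrib)
  also have "\<dots> = n"
    unfolding n_sq[symmetric] by (cases "n = 0") (simp_all add: power2_eq_square)
  finally show ?thesis
    by (simp add: n_def)
qed

lemma herm_block_rank_one_block_herm_block:
  "herm_block a b c * rank_one_block x y * herm_block a b c
     = rank_one_block (of_real a * x + b * y) (cnj b * x + of_real c * y)"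
  by (simp add: rank_one_block_eq_block_03 herm_block_def block_03_mult block_03_eq_iff algebra_simps)

lemma fidelity_herm_block_rank_one_block:
  assumes "block_psd p q r"
  shows "fidelity (herm_block p q r) (rank_one_block w0 w3) = sqrt (block_form p q r w0 w3)"
proof -
  obtain a b c where psd_root: "block_psd a b c" and root: "herm_block a b c * herm_block a b c = herm_block p q r"
    using block_psd_sqrt_exists[OF assms] .
  then have pqr: "p = a\<^sup>2 + (cmod b)\<^sup>2" "q = b * of_real (a + c)" "r = c\<^sup>2 + (cmod b)\<^sup>2"
    unfolding herm_block_square herm_block_eq_iff by simp_all
  \<comment> \<open>with S = sqrt H and u = S w, S |w><w| S = |u><u|, whose root has trace |u| = sqrt <w, H w>\<close>
  define u0 where "u0 = of_real a * w0 + b * w3"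
  define u3 where "u3 = cnj b * w0 + of_real c * w3"
  have "fidelity (herm_block p q r) (rank_one_block w0 w3) = sqrt ((cmod u0)\<^sup>2 + (cmod u3)\<^sup>2)"
    unfolding fidelity_def root[symmetric] msqrt_herm_block_square[OF psd_root]
      herm_block_rank_one_block_herm_block u0_def u3_def trace_msqrt_rank_one_block ..
  also have "(cmod u0)\<^sup>2 + (cmod u3)\<^sup>2 = block_form p q r w0 w3"
  proof -
    have "complex_of_real ((cmod u0)\<^sup>2 + (cmod u3)\<^sup>2) = u0 * cnj u0 + u3 * cnj u3"
      by (simp add: mult_cnj_eq_norm_sq)
    also have "\<dots> = of_real p * (w0 * cnj w0) + of_real r * (w3 * cnj w3)
        + (q * w3 * cnj w0 + cnj (q * w3 * cnj w0))"
    proof -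
      have "complex_of_real p = of_real a * of_real a + b * cnj b"
        and "complex_of_real r = of_real c * of_real c + b * cnj b"
        unfolding pqr by (simp_all add: mult_cnj_eq_norm_sq power2_eq_square)
      then show ?thesis
        unfolding pqr(2) u0_def u3_def by (simp add: algebra_simps)
    qed
    also have "\<dots> = complex_of_real (block_form p q r w0 w3)"
      unfolding block_form_def complex_add_cnj by (simp add: mult_cnj_eq_norm_sq)
    finally show ?thesis
      by (simp only: of_real_eq_iff)
  qed
  finally show ?thesis .
qed

lemma fidelity_mixture_rank_one_block:
  assumes "0 \<le> s" "0 \<le> t"
  shows "fidelity (of_real s \<cdot>\<^sub>m rank_one_block g0 g3 + of_real t \<cdot>\<^sub>m rank_one_block h0 h3) (rank_one_block w0 w3)
    = sqrt (s * (cmod (g0 * cnj w0 + g3 * cnj w3))\<^sup>2 + t * (cmod (h0 * cnj w0 + h3 * cnj w3))\<^sup>2)"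
  unfolding rank_one_block_def[of g0 g3] rank_one_block_def[of h0 h3] herm_block_combination
  using fidelity_herm_block_rank_one_block[OF block_psd_combination[OF assms block_psd_rank_one block_psd_rank_one]]
  by (simp add: block_form_combination block_form_rank_one)

definition ghz_like :: "real \<Rightarrow> real \<Rightarrow> complex vec" where
  "ghz_like \<alpha> \<beta> = vec 8 (\<lambda>i. if i = 0 then of_real \<alpha> else if i = 7 then of_real \<beta> else 0)"

lemma psi_GHZ_eq_ghz_like: "psi_GHZ = ghz_like (1 / sqrt 2) (1 / sqrt 2)"
  unfolding psi_GHZ_def ghz_like_def by (intro arg_cong[where f = "vec 8"]) auto

lemma psi_GGHZ_eq_ghz_like: "psi_GGHZ \<theta> = ghz_like (cos \<theta>) (sin \<theta>)"
  unfolding psi_GGHZ_def ghz_like_def ..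

definition pauli_eigvec :: "nat \<Rightarrow> nat \<Rightarrow> complex vec" where
  "pauli_eigvec a x = (if x = 2 then vec_of_list [of_bool (a = 0), of_bool (a = 1)]
     else vec_of_list [1 / of_real (sqrt 2), (-1) ^ a * (if x = 0 then 1 else \<i>) / of_real (sqrt 2)])"

lemma dim_pauli_eigvec [simp]: "dim_vec (pauli_eigvec a x) = 2"
  by (simp add: pauli_eigvec_def)

lemma meas_proj_eq_proj_ket:
  assumes "a < 2" "x < 3"
  shows "meas_proj a x = proj_ket (pauli_eigvec a x)"
proof (rule eq_matI)
  fix i j
  assume "i < dim_row (proj_ket (pauli_eigvec a x))" "j < dim_col (proj_ket (pauli_eigvec a x))"
  then have "i = 0 \<or> i = 1" "j = 0 \<or> j = 1"
    by (auto simp: proj_ket_def)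
  moreover have "1 / (complex_of_real (sqrt 2) * complex_of_real (sqrt 2)) = 1 / 2"
    by (simp flip: of_real_mult)
  moreover have "a = 0 \<or> a = 1" "x = 0 \<or> x = 1 \<or> x = 2"
    using assms by auto
  ultimately show "meas_proj a x $$ (i,j) = proj_ket (pauli_eigvec a x) $$ (i,j)"
    by (elim disjE) (simp_all add: meas_proj_def pauli_def pauli_x_def pauli_y_def pauli_z_def
        proj_ket_def pauli_eigvec_def)
qed (simp_all add: meas_proj_def pauli_def pauli_x_def pauli_y_def pauli_z_def proj_ket_def pauli_eigvec_def)

lemma ptrace_first_measured_ghz_like:
  assumes "dim_vec e = 2"
  shows "ptrace_first 2 4 (kron (kron (proj_ket e) (1\<^sub>m 2)) (1\<^sub>m 2) * proj_ket (ghz_like \<alpha> \<beta>))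
     = rank_one_block (of_real \<alpha> * cnj (e$0)) (of_real \<beta> * cnj (e$1))"
proof (rule eq_matI)
  fix i j
  assume "i < dim_row (rank_one_block (of_real \<alpha> * cnj (e$0)) (of_real \<beta> * cnj (e$1)))"
    "j < dim_col (rank_one_block (of_real \<alpha> * cnj (e$0)) (of_real \<beta> * cnj (e$1)))"
  then have "i < 4" "j < 4"
    by (simp_all add: rank_one_block_def herm_block_def)
  then show "ptrace_first 2 4 (kron (kron (proj_ket e) (1\<^sub>m 2)) (1\<^sub>m 2) * proj_ket (ghz_like \<alpha> \<beta>)) $$ (i,j)
      = rank_one_block (of_real \<alpha> * cnj (e$0)) (of_real \<beta> * cnj (e$1)) $$ (i,j)"
    using assms unfolding less_4_cases rank_one_block_eq_block_03
    by (elim disjE) (simp_all add: ptrace_first_def kron_def proj_ket_def ghz_like_def block_03_def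
        scalar_prod_def sum_atLeast0_lessThan_8 sum_lessThan_2 mult.commute)
qed (simp_all add: ptrace_first_def rank_one_block_def herm_block_def)

lemma assemblage_of_ghz_like:
  assumes "a < 2" "x < 3"
  shows "assemblage_of (ghz_like \<alpha> \<beta>) a x
     = rank_one_block (of_real \<alpha> * cnj (pauli_eigvec a x $ 0)) (of_real \<beta> * cnj (pauli_eigvec a x $ 1))"
  unfolding assemblage_of_def meas_proj_eq_proj_ket[OF assms]
  by (rule ptrace_first_measured_ghz_like) simp

lemma norm_pauli_eigvec_sq:
  assumes "a < 2" "x < 3"
  shows "(cmod (pauli_eigvec a x $ 0))\<^sup>2 = (if x = 2 then of_bool (a = 0) else 1 / 2)"
    and "(cmod (pauli_eigvec a x $ 1))\<^sup>2 = (if x = 2 then of_bool (a = 1) else 1 / 2)"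
  using assms by (auto simp: pauli_eigvec_def norm_divide power_divide norm_mult less_2_cases_iff)

definition mixed_assemblage :: "real \<Rightarrow> real \<Rightarrow> real \<Rightarrow> nat \<Rightarrow> nat \<Rightarrow> complex mat" where
  "mixed_assemblage Ps Pf \<theta> a x
     = of_real Ps \<cdot>\<^sub>m assemblage_of psi_GHZ a x + of_real Pf \<cdot>\<^sub>m assemblage_of (psi_GGHZ \<theta>) a x"

lemma fidelity_mixed_assemblage:
  assumes "a < 2" "x < 3" "0 \<le> Ps" "0 \<le> Pf"
  defines "w0 \<equiv> (cmod (pauli_eigvec a x $ 0))\<^sup>2" and "w1 \<equiv> (cmod (pauli_eigvec a x $ 1))\<^sup>2"
  shows "fidelity (mixed_assemblage Ps Pf \<theta> a x) (assemblage_of psi_GHZ a x)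
     = sqrt (Ps / 4 + Pf / 2 * (cos \<theta> * w0 + sin \<theta> * w1)\<^sup>2)"
proof -
  let ?e0 = "pauli_eigvec a x $ 0" and ?e1 = "pauli_eigvec a x $ 1" and ?k = "1 / sqrt 2"
  have unit: "w0 + w1 = 1"
    using norm_pauli_eigvec_sq[OF assms(1,2)] assms(1) by (auto simp: w0_def w1_def)
  have k_sq: "?k * ?k = 1 / 2"
    by simp
  have sqrt_2_sq: "complex_of_real (sqrt 2) * complex_of_real (sqrt 2) = 2"
    by (simp flip: of_real_mult)
  have overlap_GHZ: "of_real ?k * cnj ?e0 * cnj (of_real ?k * cnj ?e0) + of_real ?k * cnj ?e1 * cnj (of_real ?k * cnj ?e1)
      = complex_of_real (1 / 2)"
  proof -
    have "of_real ?k * cnj ?e0 * cnj (of_real ?k * cnj ?e0) + of_real ?k * cnj ?e1 * cnj (of_real ?k * cnj ?e1)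
        = complex_of_real (?k * ?k * (w0 + w1))"
      by (simp add: w0_def w1_def mult_cnj_eq_norm_sq sqrt_2_sq algebra_simps)
    then show ?thesis
      by (simp only: unit k_sq mult_1_right)
  qed
  have overlap_GGHZ: "of_real (cos \<theta>) * cnj ?e0 * cnj (of_real ?k * cnj ?e0)
      + of_real (sin \<theta>) * cnj ?e1 * cnj (of_real ?k * cnj ?e1)
      = complex_of_real (?k * (cos \<theta> * w0 + sin \<theta> * w1))"
    by (simp add: w0_def w1_def mult_cnj_eq_norm_sq algebra_simps)
  show ?thesis
    unfolding mixed_assemblage_def psi_GHZ_eq_ghz_like psi_GGHZ_eq_ghz_like assemblage_of_ghz_like[OF assms(1,2)]
      fidelity_mixture_rank_one_block[OF assms(3,4)] overlap_GHZ overlap_GGHZ norm_of_real power2_abs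
    by (simp add: power_mult_distrib power_divide)
qed

lemma assemblage_fidelity_mixed_assemblage:
  assumes "0 \<le> Ps" "0 \<le> Pf"
  shows "assemblage_fidelity (mixed_assemblage Ps Pf \<theta>) (assemblage_of psi_GHZ)
     = sqrt (Ps + Pf / 2 * (cos \<theta> + sin \<theta>)\<^sup>2)"
proof -
  define F where "F x = (\<Sum>a<2. fidelity (mixed_assemblage Ps Pf \<theta> a x) (assemblage_of psi_GHZ a x))" for x
  define z where "z a x = Complex (sqrt Ps / 2)
      (sqrt (Pf / 2) * (cos \<theta> * (cmod (pauli_eigvec a x $ 0))\<^sup>2 + sin \<theta> * (cmod (pauli_eigvec a x $ 1))\<^sup>2))"
    for a x
  have F_eq: "F x = cmod (z 0 x) + cmod (z 1 x)" if "x < 3" for x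
    using fidelity_mixed_assemblage[OF _ that assms] assms
    by (simp add: F_def z_def sum_lessThan_2 complex_norm power_mult_distrib power_divide)
  have z_sum: "z 0 x + z 1 x = Complex (sqrt Ps) (sqrt (Pf / 2) * (cos \<theta> + sin \<theta>))" if "x < 3" for x
    using norm_pauli_eigvec_sq[of 0 x] norm_pauli_eigvec_sq[of 1 x] that
    by (auto simp: z_def complex_eq_iff algebra_simps)
  have norm_z_sum: "cmod (z 0 x + z 1 x) = sqrt (Ps + Pf / 2 * (cos \<theta> + sin \<theta>)\<^sup>2)" if "x < 3" for x
    unfolding z_sum[OF that] using assms by (simp add: complex_norm power_mult_distrib)
  show ?thesis
    unfolding assemblage_fidelity_def F_def[symmetric]
  proof (rule Min_eqI)
    fix y
    assume "y \<in> F ` {..<3}"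
    then obtain x where x: "x < 3" and "y = F x"
      by auto
    then show "sqrt (Ps + Pf / 2 * (cos \<theta> + sin \<theta>)\<^sup>2) \<le> y"
      using norm_triangle_ineq[of "z 0 x" "z 1 x"] norm_z_sum[OF x] F_eq[OF x] by linarith
  next
    have "z 0 0 = z 1 0"
      by (simp add: z_def pauli_eigvec_def norm_divide)
    then have "F 0 = cmod (z 0 0 + z 1 0)"
      by (simp add: F_eq norm_mult_numeral1 flip: mult_2)
    then show "sqrt (Ps + Pf / 2 * (cos \<theta> + sin \<theta>)\<^sup>2) \<in> F ` {..<3}"
      using norm_z_sum[of 0] by (metis imageI lessThan_iff zero_less_numeral)
  qed simp
qed

theorem theorem1:
  fixes \<theta> :: real and N :: nat
  assumes "0 < \<theta>" and "\<theta> < pi / 4" and "N \<ge> 2"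
  defines "P_fail \<equiv> (1 - 2 * (sin \<theta>)^2) ^ (N - 1)"
  defines "P_success \<equiv> 1 - P_fail"
  defines "sigma_dist \<equiv> (\<lambda>a x. complex_of_real P_success \<cdot>\<^sub>m assemblage_of psi_GHZ a x
                         + complex_of_real P_fail \<cdot>\<^sub>m assemblage_of (psi_GGHZ \<theta>) a x)"
  shows "assemblage_fidelity sigma_dist (assemblage_of psi_GHZ)
           = sqrt (1 - (1/2) * (1 - sin (2 * \<theta>)) * (cos (2 * \<theta>)) ^ (N - 1))"
proof -
  \<comment> \<open>of the hypotheses only cos (2 theta) > 0 is used, to get 0 \<le> P_fail \<le> 1\<close>
  have P_fail_eq: "P_fail = cos (2 * \<theta>) ^ (N - 1)"
    by (simp add: P_fail_def cos_double_sin)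
  have "0 < cos (2 * \<theta>)"
    using assms(1,2) by (intro cos_gt_zero_pi) auto
  then have "0 \<le> P_fail" "P_fail \<le> 1"
    by (simp_all add: P_fail_eq power_le_one)
  then have "assemblage_fidelity sigma_dist (assemblage_of psi_GHZ)
      = sqrt (P_success + P_fail / 2 * (cos \<theta> + sin \<theta>)\<^sup>2)"
    using assemblage_fidelity_mixed_assemblage[of P_success P_fail \<theta>]
    by (simp add: P_success_def sigma_dist_def mixed_assemblage_def[abs_def])
  also have "(cos \<theta> + sin \<theta>)\<^sup>2 = (cos \<theta>)\<^sup>2 + (sin \<theta>)\<^sup>2 + 2 * sin \<theta> * cos \<theta>"
    by (simp add: power2_sum algebra_simps)
  also have "\<dots> = 1 + sin (2 * \<theta>)"
    by (simp add: sin_double)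
  finally show ?thesis
    by (simp add: P_success_def P_fail_eq algebra_simps)
qed

end
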